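(* Let $\mathscr{H}$ be a complex Hilbert space and let $B,C$ be Hilbert–Schmidt operators on $\mathscr{H}$. Then $$w_{(2,e)}^2(B,C)\geq\frac18\,|\mathrm{tr}((B+C)^2)+\mathrm{tr}((B-C)^2)+2\,\mathrm{tr}((B+C)(B-C))|+\frac18\left(\|B+C\|_2^2+\|B-C\|_2^2\right)+\frac14\,\mathrm{Re}\big(\mathrm{tr}((B+C)(B-C)^* )\big),$$ where $\mathrm{Re}(z)$ denotes the real part of $z\in\mathbb{C}$.
   Context: An operator $T$ on $\mathscr{H}$ is Hilbert–Schmidt if $\sum_i\|Te_i\|^2<\infty$ for some (equivalently every) orthonormal basis $\{e_i\}$; its Hilbert–Schmidt norm is $\|T\|_2=(\mathrm{tr}(T^*T))^{1/2}$. For an operator $T$, $\Re(T)=\frac12(T+T^* )$. The Hilbert–Schmidt Euclidean operator radius is $w_{(2,e)}(B,C)=\sup_{\lambda_1,\lambda_2\in\mathbb{C},\ |\lambda_1|^2+|\lambda_2|^2\leq1}\sup_{\theta\in\mathbb{R}}\|\Re(e^{i\theta}(\lambda_1B+\lambda_2C))\|_2$. *)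

theory Defs
  imports "HOL-Analysis.Analysis"
begin

class complex_vector = real_vector +
  fixes scaleC :: "complex \<Rightarrow> 'a \<Rightarrow> 'a" (infixr "*\<^sub>C" 75)
  assumes scaleC_add_right: "a *\<^sub>C (x + y) = a *\<^sub>C x + a *\<^sub>C y"
    and scaleC_add_left: "(a + b) *\<^sub>C x = a *\<^sub>C x + b *\<^sub>C x"
    and scaleC_scaleC: "a *\<^sub>C (b *\<^sub>C x) = (a * b) *\<^sub>C x"
    and scaleC_one: "1 *\<^sub>C x = x"
    and scaleR_scaleC: "scaleR r x = complex_of_real r *\<^sub>C x"

class complex_inner = complex_vector + real_normed_vector +
  fixes cinner :: "'a \<Rightarrow> 'a \<Rightarrow> complex"
  assumes cinner_commute: "cinner x y = cnj (cinner y x)"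
    and cinner_add_left: "cinner (x + y) z = cinner x z + cinner y z"
    and cinner_scaleC_left: "cinner (r *\<^sub>C x) y = cnj r * cinner x y"
    and cinner_ge_zero: "0 \<le> Re (cinner x x)"
    and cinner_eq_zero_iff: "cinner x x = 0 \<longleftrightarrow> x = 0"
    and norm_eq_sqrt_cinner: "norm x = sqrt (Re (cinner x x))"

text \<open>A complex Hilbert space is a type of sort complex_inner and complete_space.\<close>

definition bounded_clinear :: "('a::complex_inner \<Rightarrow> 'b::complex_inner) \<Rightarrow> bool" where
  "bounded_clinear T \<longleftrightarrow>
     (\<forall>x y. T (x + y) = T x + T y) \<and> (\<forall>c x. T (c *\<^sub>C x) = c *\<^sub>C T x) \<and>
     (\<exists>K. \<forall>x. norm (T x) \<le> norm x * K)"

definition adjoint :: "('a::complex_inner \<Rightarrow> 'a) \<Rightarrow> ('a \<Rightarrow> 'a)" where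
  "adjoint T = (SOME S. \<forall>x y. cinner (S x) y = cinner x (T y))"

text \<open>Orthonormal basis = maximal orthonormal set.\<close>
definition is_onb :: "'a::complex_inner set \<Rightarrow> bool" where
  "is_onb E \<longleftrightarrow> (\<forall>e\<in>E. cinner e e = 1) \<and>
     (\<forall>e\<in>E. \<forall>f\<in>E. e \<noteq> f \<longrightarrow> cinner e f = 0) \<and>
     (\<forall>x. (\<forall>e\<in>E. cinner e x = 0) \<longrightarrow> x = 0)"

definition hilbert_schmidt :: "('a::complex_inner \<Rightarrow> 'a) \<Rightarrow> bool" where
  "hilbert_schmidt T \<longleftrightarrow> bounded_clinear T \<and>
     (\<exists>E. is_onb E \<and> (\<lambda>e. (norm (T e))\<^sup>2) summable_on E)"

text \<open>Trace, computed with respect to a (fixed, arbitrary) orthonormal basis.\<close>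
definition trace :: "('a::complex_inner \<Rightarrow> 'a) \<Rightarrow> complex" where
  "trace T = infsum (\<lambda>e. cinner e (T e)) (SOME E. is_onb E)"

definition hs_norm :: "('a::complex_inner \<Rightarrow> 'a) \<Rightarrow> real" where
  "hs_norm T = sqrt (Re (trace (\<lambda>x. adjoint T (T x))))"

definition re_op :: "('a::complex_inner \<Rightarrow> 'a) \<Rightarrow> ('a \<Rightarrow> 'a)" where
  "re_op T = (\<lambda>x. (1/2) *\<^sub>C (T x + adjoint T x))"

definition w2e :: "('a::complex_inner \<Rightarrow> 'a) \<Rightarrow> ('a \<Rightarrow> 'a) \<Rightarrow> real" where
  "w2e B C = Sup {hs_norm (re_op (\<lambda>x. exp (\<i> * complex_of_real \<theta>) *\<^sub>C (l1 *\<^sub>C B x + l2 *\<^sub>C C x)))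
                  | l1 l2 \<theta>. (cmod l1)\<^sup>2 + (cmod l2)\<^sup>2 \<le> 1}"

end

(*
  Write X = B + C and Y = B - C.  Since X + Y = 2 B, the three traces combine to
  tr X^2 + tr Y^2 + 2 tr XY = tr (X + Y)^2 = 4 tr B^2 (using tr XY = tr YX), the parallelogram law
  gives ||X||_2^2 + ||Y||_2^2 = 2 ||B||_2^2 + 2 ||C||_2^2, and Re tr (Y^* X) = ||B||_2^2 - ||C||_2^2.
  Hence the right-hand side is |tr B^2| / 2 + ||B||_2^2 / 2.  For |w| = 1 one computes
  ||Re (w B)||_2^2 = Re (w^2 tr B^2) / 2 + ||B||_2^2 / 2, so choosing lambda_1 = 1, lambda_2 = 0 and
  w = exp (i theta) with w^2 tr B^2 = |tr B^2| attains this value.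

  The analytic work is in making these traces meaningful: a Hilbert-Schmidt operator has an
  adjoint, given by an orthonormal expansion, and tr (P^* Q) = sum_e <P e, Q e> may be computed
  in any orthonormal basis, because the double series of <P e, f> <f, Q e> converges absolutely.
*)

theory Submission
  imports Defs
begin

section \<open>Complex inner product spaces\<close>

lemma scaleC_zero_left [simp]: "0 *\<^sub>C (x::'a::complex_vector) = 0"
  by (metis scaleR_scaleC scale_zero_left of_real_0)

lemma cinner_add_right: "cinner (x::'a::complex_inner) (y + z) = cinner x y + cinner x z"
  by (metis cinner_add_left cinner_commute complex_cnj_add)

lemma cinner_scaleC_right: "cinner (x::'a::complex_inner) (r *\<^sub>C y) = r * cinner x y"
  by (metis cinner_commute cinner_scaleC_left complex_cnj_cnj complex_cnj_mult)

lemma cinner_zero_left [simp]: "cinner (0::'a::complex_inner) y = 0"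
  by (metis cinner_scaleC_left complex_cnj_zero mult_zero_left scaleC_zero_left)

lemma cinner_zero_right [simp]: "cinner (x::'a::complex_inner) 0 = 0"
  by (metis cinner_commute cinner_zero_left complex_cnj_zero)

lemma cinner_diff_left: "cinner (x - y::'a::complex_inner) z = cinner x z - cinner y z"
  by (metis add_diff_cancel_right' cinner_add_left diff_add_cancel eq_diff_eq)

lemma cinner_diff_right: "cinner (x::'a::complex_inner) (y - z) = cinner x y - cinner x z"
  by (metis add_diff_cancel_right' cinner_add_right diff_add_cancel eq_diff_eq)

lemma cinner_sum_left: "cinner (\<Sum>i\<in>F. f i) (y::'a::complex_inner) = (\<Sum>i\<in>F. cinner (f i) y)"
  by (induction F rule: infinite_finite_induct) (auto simp: cinner_add_left)

lemma cinner_sum_right: "cinner (y::'a::complex_inner) (\<Sum>i\<in>F. f i) = (\<Sum>i\<in>F. cinner y (f i))"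
  by (induction F rule: infinite_finite_induct) (auto simp: cinner_add_right)

lemma cnj_cinner: "cnj (cinner (x::'a::complex_inner) y) = cinner y x"
  by (metis cinner_commute)

lemma cnj_mult_self: "cnj z * z = complex_of_real ((cmod z)\<^sup>2)"
  by (metis complex_norm_square mult.commute)

lemma exists_rotation_to_modulus: "\<exists>\<theta>. (exp (\<i> * complex_of_real \<theta>))\<^sup>2 * z = complex_of_real (cmod z)"
proof
  have "(exp (\<i> * complex_of_real (- Arg z / 2)))\<^sup>2 = cis (- Arg z)"
    by (simp add: cis_conv_exp power2_eq_square exp_add[symmetric] algebra_simps)
  moreover have "z = complex_of_real (cmod z) * cis (Arg z)"
    by (metis rcis_cmod_Arg rcis_def)
  moreover have "cis (- Arg z) * cis (Arg z) = 1"
    by (simp add: cis_mult)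
  ultimately show "(exp (\<i> * complex_of_real (- Arg z / 2)))\<^sup>2 * z = complex_of_real (cmod z)"
    by (metis mult.left_commute mult.right_neutral)
qed

lemma cinner_self: "cinner (x::'a::complex_inner) x = complex_of_real ((norm x)\<^sup>2)"
proof -
  have "Im (cinner x x) = Im (cnj (cinner x x))"
    by (subst cinner_commute) simp
  then have "Im (cinner x x) = 0" by simp
  moreover have "Re (cinner x x) = (norm x)\<^sup>2"
    using norm_eq_sqrt_cinner[of x] cinner_ge_zero[of x] by simp
  ultimately show ?thesis by (simp add: complex_eq_iff)
qed

lemma norm_sq_eq_Re_cinner: "(norm (x::'a::complex_inner))\<^sup>2 = Re (cinner x x)"
  by (simp add: cinner_self)

lemma norm_scaleC: "norm (a *\<^sub>C (x::'a::complex_inner)) = cmod a * norm x"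
proof -
  have "(norm (a *\<^sub>C x))\<^sup>2 = Re (a * cnj a * cinner x x)"
    by (simp only: norm_sq_eq_Re_cinner cinner_scaleC_left cinner_scaleC_right mult.assoc)
  also have "\<dots> = (cmod a * norm x)\<^sup>2"
    by (simp add: cinner_self power_mult_distrib complex_norm_square[symmetric])
  finally show ?thesis
    by (simp add: power2_eq_iff_nonneg)
qed

lemma norm_add_sq_cinner:
  "(norm (x + y::'a::complex_inner))\<^sup>2 = (norm x)\<^sup>2 + (norm y)\<^sup>2 + 2 * Re (cinner x y)"
proof -
  have "Re (cinner y x) = Re (cinner x y)"
    by (subst cinner_commute) simp
  then show ?thesis
    by (simp add: norm_sq_eq_Re_cinner cinner_add_left cinner_add_right)
qed

text \<open>The triangle inequality already yields the real part of Cauchy--Schwarz; a rotation of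
  \<open>y\<close> then gives the full inequality.\<close>
lemma Re_cinner_le: "Re (cinner (x::'a::complex_inner) y) \<le> norm x * norm y"
proof -
  have "(norm (x + y))\<^sup>2 \<le> (norm x + norm y)\<^sup>2"
    by (simp add: norm_triangle_ineq power_mono)
  then show ?thesis by (simp add: norm_add_sq_cinner power2_sum)
qed

lemma Cauchy_Schwarz_cinner: "cmod (cinner (x::'a::complex_inner) y) \<le> norm x * norm y"
proof (cases "cinner x y = 0")
  case False
  define w where "w = cnj (cinner x y) / cmod (cinner x y)"
  have "cnj (cinner x y) * cinner x y = (cmod (cinner x y))\<^sup>2"
    by (simp only: cnj_mult_self)
  then have "cinner x (w *\<^sub>C y) = cmod (cinner x y)"
    using False by (simp add: w_def cinner_scaleC_right power2_eq_square)
  moreover have "cmod w = 1"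
    using False by (simp add: w_def norm_divide)
  ultimately show ?thesis
    using Re_cinner_le[of x "w *\<^sub>C y"] by (simp add: norm_scaleC)
qed simp

lemma bounded_linear_cinner_right: "bounded_linear (cinner (x::'a::complex_inner))"
proof (rule bounded_linear_intro[where K = "norm x"])
  show "cinner x (r *\<^sub>R y) = r *\<^sub>R cinner x y" for r y
    by (simp add: scaleR_scaleC cinner_scaleC_right scaleR_conv_of_real)
  show "norm (cinner x y) \<le> norm y * norm x" for y
    by (metis Cauchy_Schwarz_cinner mult.commute)
qed (rule cinner_add_right)

lemma bounded_clinear_imp_bounded_linear: "bounded_clinear T \<Longrightarrow> bounded_linear T"
  unfolding bounded_clinear_def
  by (elim conjE exE, intro bounded_linear_intro) (auto simp: scaleR_scaleC)

lemma mult_le_sum_squares: "(x::real) * y \<le> x\<^sup>2 + y\<^sup>2"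
proof -
  have "0 \<le> (x - y)\<^sup>2 + x\<^sup>2 + y\<^sup>2"
    by simp
  then show ?thesis
    unfolding power2_diff mult.assoc by linarith
qed

lemma norm_parallelogram_cinner:
  "(norm (x + y))\<^sup>2 + (norm (x - y))\<^sup>2 = 2 * (norm x)\<^sup>2 + 2 * (norm (y::'a::complex_inner))\<^sup>2"
  by (simp add: norm_sq_eq_Re_cinner cinner_add_left cinner_add_right cinner_diff_left cinner_diff_right)

lemma Re_cinner_add_diff:
  "Re (cinner (x + y) (x - y)) = (norm x)\<^sup>2 - (norm (y::'a::complex_inner))\<^sup>2"
proof -
  have "Re (cinner y x) = Re (cinner x y)"
    by (subst cinner_commute) simp
  then show ?thesis
    by (simp add: norm_sq_eq_Re_cinner cinner_add_left cinner_diff_right)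
qed

lemma norm_rotation_midpoint_sq:
  assumes "cmod w = 1"
  shows "(norm ((1/2) *\<^sub>C (w *\<^sub>C x + cnj w *\<^sub>C y)))\<^sup>2
    = ((norm x)\<^sup>2 + (norm (y::'a::complex_inner))\<^sup>2) / 4 + Re (w\<^sup>2 * cinner y x) / 2"
proof -
  define u where "u = w\<^sup>2 * cinner y x"
  have ww: "cnj w * w = 1"
    using assms cnj_mult_self[of w] by simp
  have cnj_u: "cnj w * cnj w * cinner x y = cnj u"
    unfolding u_def by (simp add: cnj_cinner power2_eq_square)
  have "cinner ((1/2) *\<^sub>C (w *\<^sub>C x + cnj w *\<^sub>C y)) ((1/2) *\<^sub>C (w *\<^sub>C x + cnj w *\<^sub>C y))
      = (cnj w * w * cinner x x + cnj w * w * cinner y y + cnj w * cnj w * cinner x y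
         + w * w * cinner y x) / 4"
    by (simp add: cinner_scaleC_left cinner_scaleC_right cinner_add_left cinner_add_right
        algebra_simps)
  also have "\<dots> = (cinner x x + cinner y y + cnj u + u) / 4"
    unfolding ww cnj_u by (simp add: u_def power2_eq_square)
  finally have "Re (cinner ((1/2) *\<^sub>C (w *\<^sub>C x + cnj w *\<^sub>C y)) ((1/2) *\<^sub>C (w *\<^sub>C x + cnj w *\<^sub>C y)))
      = Re ((cinner x x + cinner y y + cnj u + u) / 4)"
    by (rule arg_cong)
  then show ?thesis
    unfolding norm_sq_eq_Re_cinner u_def[symmetric] by (simp add: field_simps)
qed

lemma norm_midpoint_sq_le:
  "(norm ((1/2) *\<^sub>C (x + y)))\<^sup>2 \<le> ((norm x)\<^sup>2 + (norm (y::'a::complex_inner))\<^sup>2) / 2"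
proof -
  have "norm ((1/2) *\<^sub>C (x + y)) \<le> (norm x + norm y) / 2"
    using norm_triangle_ineq[of x y] by (simp add: norm_scaleC)
  then have "(norm ((1/2) *\<^sub>C (x + y)))\<^sup>2 \<le> ((norm x + norm y) / 2)\<^sup>2"
    by (simp add: power_mono)
  also have "\<dots> \<le> ((norm x)\<^sup>2 + (norm y)\<^sup>2) / 2"
    using sum_squares_bound[of "norm x" "norm y"] by (simp add: power2_sum power_divide)
  finally show ?thesis .
qed

lemma norm_lincomb_sq_le:
  assumes "(cmod a)\<^sup>2 + (cmod b)\<^sup>2 \<le> 1"
  shows "(norm (a *\<^sub>C x + b *\<^sub>C y))\<^sup>2 \<le> (norm x)\<^sup>2 + (norm (y::'a::complex_inner))\<^sup>2"
proof -
  have "norm (a *\<^sub>C x + b *\<^sub>C y) \<le> cmod a * norm x + cmod b * norm y"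
    using norm_triangle_ineq[of "a *\<^sub>C x" "b *\<^sub>C y"] by (simp add: norm_scaleC)
  then have "(norm (a *\<^sub>C x + b *\<^sub>C y))\<^sup>2 \<le> (cmod a * norm x + cmod b * norm y)\<^sup>2"
    by (simp add: power_mono)
  also have "\<dots> \<le> ((cmod a)\<^sup>2 + (cmod b)\<^sup>2) * ((norm x)\<^sup>2 + (norm y)\<^sup>2)"
    using sum_squares_bound[of "cmod a * norm y" "cmod b * norm x"]
    by (simp add: power2_sum power_mult_distrib algebra_simps)
  also have "\<dots> \<le> (norm x)\<^sup>2 + (norm y)\<^sup>2"
    using assms by (simp add: mult_left_le_one_le)
  finally show ?thesis .
qed

section \<open>Unconditional sums\<close>

lemma summable_on_iff_Cauchy:
  fixes f :: "'b \<Rightarrow> 'a::{real_normed_vector,complete_space}"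
  shows "f summable_on A \<longleftrightarrow>
    (\<forall>\<epsilon>>0. \<exists>F0. finite F0 \<and> F0 \<subseteq> A \<and> (\<forall>G. finite G \<and> G \<subseteq> A - F0 \<longrightarrow> norm (sum f G) < \<epsilon>))"
proof
  assume "f summable_on A"
  then obtain L where L: "(sum f \<longlongrightarrow> L) (finite_subsets_at_top A)"
    unfolding summable_on_def has_sum_def by blast
  show "\<forall>\<epsilon>>0. \<exists>F0. finite F0 \<and> F0 \<subseteq> A \<and> (\<forall>G. finite G \<and> G \<subseteq> A - F0 \<longrightarrow> norm (sum f G) < \<epsilon>)"
  proof (intro allI impI)
    fix \<epsilon> :: real assume "\<epsilon> > 0"
    then have "eventually (\<lambda>F. dist (sum f F) L < \<epsilon> / 2) (finite_subsets_at_top A)"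
      using L by (intro tendstoD) auto
    then obtain F0 where F0: "finite F0" "F0 \<subseteq> A"
      and near: "\<forall>F. finite F \<and> F0 \<subseteq> F \<and> F \<subseteq> A \<longrightarrow> dist (sum f F) L < \<epsilon> / 2"
      unfolding eventually_finite_subsets_at_top by auto
    have "norm (sum f G) < \<epsilon>" if "finite G" "G \<subseteq> A - F0" for G
    proof -
      have "F0 \<union> G \<subseteq> A"
        using that F0 by blast
      have "sum f G = sum f (F0 \<union> G) - sum f F0"
        using that F0 by (subst sum.union_disjoint) auto
      also have "norm \<dots> \<le> dist (sum f (F0 \<union> G)) L + dist (sum f F0) L"
        using dist_triangle2[of "sum f (F0 \<union> G)" "sum f F0" L] by (simp add: dist_norm)
      also have "\<dots> < \<epsilon>"
        using near[rule_format, of "F0 \<union> G"] near[rule_format, of F0] \<open>F0 \<union> G \<subseteq> A\<close> that F0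
        by auto
      finally show ?thesis .
    qed
    with F0 show "\<exists>F0. finite F0 \<and> F0 \<subseteq> A \<and> (\<forall>G. finite G \<and> G \<subseteq> A - F0 \<longrightarrow> norm (sum f G) < \<epsilon>)"
      by blast
  qed
next
  assume tails: "\<forall>\<epsilon>>0. \<exists>F0. finite F0 \<and> F0 \<subseteq> A \<and> (\<forall>G. finite G \<and> G \<subseteq> A - F0 \<longrightarrow> norm (sum f G) < \<epsilon>)"
  have "\<exists>P. eventually P (finite_subsets_at_top A) \<and> (\<forall>F F'. P F \<and> P F' \<longrightarrow> dist (sum f F) (sum f F') < \<epsilon>)"
    if "\<epsilon> > 0" for \<epsilon>
  proof -
    from \<open>\<epsilon> > 0\<close> have "\<epsilon> / 2 > 0" by simp
    then obtain F0 where F0: "finite F0" "F0 \<subseteq> A"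
      and small: "\<forall>G. finite G \<and> G \<subseteq> A - F0 \<longrightarrow> norm (sum f G) < \<epsilon> / 2"
      using tails[rule_format, of "\<epsilon> / 2"] by blast
    define P where "P F \<longleftrightarrow> finite F \<and> F0 \<subseteq> F \<and> F \<subseteq> A" for F
    have "eventually P (finite_subsets_at_top A)"
      unfolding P_def eventually_finite_subsets_at_top using F0 by blast
    moreover have "dist (sum f F) (sum f F') < \<epsilon>" if "P F" "P F'" for F F'
    proof -
      have split: "sum f H = sum f F0 + sum f (H - F0)" if "P H" for H
        using that sum.subset_diff[of F0 H f] unfolding P_def by (simp add: add.commute)
      have "dist (sum f F) (sum f F') = norm (sum f (F - F0) - sum f (F' - F0))"
        by (simp add: dist_norm split[OF \<open>P F\<close>] split[OF \<open>P F'\<close>])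
      also have "\<dots> \<le> norm (sum f (F - F0)) + norm (sum f (F' - F0))"
        by (rule norm_triangle_ineq4)
      also have "\<dots> < \<epsilon> / 2 + \<epsilon> / 2"
        using that unfolding P_def by (intro add_strict_mono small[rule_format]) auto
      finally show ?thesis by simp
    qed
    ultimately show ?thesis by blast
  qed
  then have "cauchy_filter (filtermap (sum f) (finite_subsets_at_top A))"
    by (simp add: cauchy_filter_metric_filtermap)
  moreover have "complete (UNIV :: 'a set)"
    by (meson Cauchy_convergent UNIV_I complete_def convergent_def)
  ultimately obtain L where "(sum f \<longlongrightarrow> L) (finite_subsets_at_top A)"
    using complete_uniform[where S = UNIV] by (force simp add: filterlim_def)
  then show "f summable_on A"
    unfolding summable_on_def has_sum_def by blast
qed

lemma has_sum_diff:
  fixes f g :: "'b \<Rightarrow> 'a::topological_ab_group_add"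
  assumes "(f has_sum a) A" "(g has_sum b) A"
  shows "((\<lambda>x. f x - g x) has_sum (a - b)) A"
proof -
  have "((\<lambda>x. - g x) has_sum - b) A"
    using assms(2) by (simp add: has_sum_uminus)
  from has_sum_add[OF assms(1) this] show ?thesis by simp
qed

section \<open>Orthonormal bases\<close>

lemma onb_cinner_basis:
  assumes "is_onb E" "e \<in> E" "f \<in> E"
  shows "cinner e f = (if e = f then 1 else 0)"
  using assms unfolding is_onb_def by simp

lemma onb_eq_zeroI:
  assumes "is_onb E" "\<And>e. e \<in> E \<Longrightarrow> cinner e x = 0"
  shows "x = 0"
  using assms unfolding is_onb_def by blast

lemma onb_cinner_sum:
  assumes "is_onb E" "finite F" "F \<subseteq> E" "e \<in> F"
  shows "cinner e (\<Sum>f\<in>F. c f *\<^sub>C f) = c e"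
proof -
  have "e \<in> E"
    using assms(3,4) by blast
  have "cinner e (\<Sum>f\<in>F. c f *\<^sub>C f) = (\<Sum>f\<in>F. if f = e then c f else 0)"
    unfolding cinner_sum_right cinner_scaleC_right
  proof (intro sum.cong refl)
    fix f assume "f \<in> F"
    with assms(3) have "f \<in> E" by blast
    with \<open>e \<in> E\<close> show "c f * cinner e f = (if f = e then c f else 0)"
      using onb_cinner_basis[OF assms(1)] by auto
  qed
  also have "\<dots> = c e"
    using assms(2,4) by (simp add: sum.delta')
  finally show ?thesis .
qed

lemma onb_norm_sum_sq:
  assumes "is_onb E" "finite F" "F \<subseteq> E"
  shows "(norm (\<Sum>f\<in>F. c f *\<^sub>C f))\<^sup>2 = (\<Sum>f\<in>F. (cmod (c f))\<^sup>2)"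
proof -
  have "cinner (\<Sum>f\<in>F. c f *\<^sub>C f) (\<Sum>f\<in>F. c f *\<^sub>C f) = (\<Sum>e\<in>F. cnj (c e) * c e)"
    unfolding cinner_sum_left cinner_scaleC_left
    using onb_cinner_sum[OF assms] by simp
  also have "\<dots> = (\<Sum>e\<in>F. complex_of_real ((cmod (c e))\<^sup>2))"
    by (simp only: cnj_mult_self)
  finally show ?thesis
    by (simp add: norm_sq_eq_Re_cinner)
qed

lemma Bessel_inequality:
  assumes "is_onb E" "finite F" "F \<subseteq> E"
  shows "(\<Sum>e\<in>F. (cmod (cinner e x))\<^sup>2) \<le> (norm x)\<^sup>2"
proof -
  define s where "s = (\<Sum>f\<in>F. cinner f x *\<^sub>C f)"
  have "cinner e (x - s) = 0" if "e \<in> F" for e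
    using onb_cinner_sum[OF assms that] by (simp add: s_def cinner_diff_right)
  then have "cinner s (x - s) = 0"
    by (simp add: s_def cinner_sum_left cinner_scaleC_left)
  then have "(norm x)\<^sup>2 = (norm s)\<^sup>2 + (norm (x - s))\<^sup>2"
    using norm_add_sq_cinner[of s "x - s"] by simp
  moreover have "(norm s)\<^sup>2 = (\<Sum>e\<in>F. (cmod (cinner e x))\<^sup>2)"
    unfolding s_def by (rule onb_norm_sum_sq[OF assms])
  ultimately show ?thesis by simp
qed

lemma onb_coeffs_sq_summable:
  assumes "is_onb E"
  shows "(\<lambda>e. (cmod (cinner e x))\<^sup>2) summable_on E"
  using Bessel_inequality[OF assms]
  by (intro nonneg_bdd_above_summable_on bdd_aboveI[where M = "(norm x)\<^sup>2"]) auto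

text \<open>By Pythagoras, the finite partial sums inherit the Cauchy property of the coefficient sums.\<close>
lemma onb_series_summable:
  fixes E :: "'a::{complex_inner,complete_space} set"
  assumes E: "is_onb E" and c: "(\<lambda>e. (cmod (c e))\<^sup>2) summable_on E"
  shows "(\<lambda>e. c e *\<^sub>C e) summable_on E"
  unfolding summable_on_iff_Cauchy
proof (intro allI impI)
  fix \<epsilon> :: real assume "\<epsilon> > 0"
  then have "\<epsilon>\<^sup>2 > 0" by simp
  then obtain F0 where F0: "finite F0" "F0 \<subseteq> E"
    and small: "\<forall>G. finite G \<and> G \<subseteq> E - F0 \<longrightarrow> norm (\<Sum>e\<in>G. (cmod (c e))\<^sup>2) < \<epsilon>\<^sup>2"
    using c[unfolded summable_on_iff_Cauchy, rule_format, of "\<epsilon>\<^sup>2"] by blast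
  have "norm (\<Sum>e\<in>G. c e *\<^sub>C e) < \<epsilon>" if "finite G" "G \<subseteq> E - F0" for G
  proof -
    have "(norm (\<Sum>e\<in>G. c e *\<^sub>C e))\<^sup>2 = (\<Sum>e\<in>G. (cmod (c e))\<^sup>2)"
      using that by (intro onb_norm_sum_sq[OF E]) auto
    also have "\<dots> < \<epsilon>\<^sup>2"
      using small[rule_format, of G] that by simp
    finally show ?thesis
      using \<open>\<epsilon> > 0\<close> by (simp add: power_less_imp_less_base)
  qed
  with F0 show "\<exists>F0. finite F0 \<and> F0 \<subseteq> E \<and>
      (\<forall>G. finite G \<and> G \<subseteq> E - F0 \<longrightarrow> norm (\<Sum>e\<in>G. c e *\<^sub>C e) < \<epsilon>)"
    by blast
qed

lemma has_sum_onb_expansion: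
  fixes E :: "'a::{complex_inner,complete_space} set"
  assumes E: "is_onb E"
  shows "((\<lambda>e. cinner e x *\<^sub>C e) has_sum x) E"
proof -
  obtain s where s: "((\<lambda>e. cinner e x *\<^sub>C e) has_sum s) E"
    using onb_series_summable[OF E onb_coeffs_sq_summable[OF E]] unfolding summable_on_def by blast
  have "cinner f (x - s) = 0" if f: "f \<in> E" for f
  proof -
    have "((\<lambda>e. cinner f (cinner e x *\<^sub>C e)) has_sum cinner f s) E"
      by (rule has_sum_bounded_linear[OF bounded_linear_cinner_right s])
    moreover have "((\<lambda>e. cinner f (cinner e x *\<^sub>C e)) has_sum cinner f x) E"
    proof -
      have "((\<lambda>e. cinner f (cinner e x *\<^sub>C e)) has_sum cinner f x) {f}"
        using onb_cinner_basis[OF E f f] by (intro has_sum_finiteI) (simp_all add: cinner_scaleC_right)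
      moreover have "cinner f (cinner e x *\<^sub>C e) = 0" if "e \<in> E - {f}" for e
        using onb_cinner_basis[OF E f, of e] that by (auto simp: cinner_scaleC_right)
      ultimately show ?thesis
        using f by (subst has_sum_cong_neutral[where T = "{f}"]) auto
    qed
    ultimately show ?thesis
      by (simp add: cinner_diff_right has_sum_unique)
  qed
  then have "x = s"
    using onb_eq_zeroI[OF E] by (metis eq_iff_diff_eq_0)
  with s show ?thesis by simp
qed

lemma has_sum_Parseval:
  fixes E :: "'a::{complex_inner,complete_space} set"
  assumes "is_onb E"
  shows "((\<lambda>e. cinner x e * cinner e y) has_sum cinner x y) E"
  using has_sum_bounded_linear[OF bounded_linear_cinner_right[of x] has_sum_onb_expansion[OF assms]]
  by (simp add: cinner_scaleC_right mult.commute)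

lemma has_sum_Parseval_norm:
  fixes E :: "'a::{complex_inner,complete_space} set"
  assumes "is_onb E"
  shows "((\<lambda>e. (cmod (cinner e x))\<^sup>2) has_sum (norm x)\<^sup>2) E"
proof -
  have "cinner x e * cinner e x = complex_of_real ((cmod (cinner e x))\<^sup>2)" for e
    by (metis cnj_cinner cnj_mult_self)
  then show ?thesis
    using has_sum_Re[OF has_sum_Parseval[OF assms, of x x]] by (simp add: norm_sq_eq_Re_cinner)
qed

section \<open>Adjoints\<close>

definition is_adjoint :: "('a::complex_inner \<Rightarrow> 'a) \<Rightarrow> ('a \<Rightarrow> 'a) \<Rightarrow> bool" where
  "is_adjoint T S \<longleftrightarrow> (\<forall>x y. cinner (S x) y = cinner x (T y))"

lemma is_adjointD: "is_adjoint T S \<Longrightarrow> cinner (S x) y = cinner x (T y)"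
  unfolding is_adjoint_def by blast

lemma is_adjoint_sym: "is_adjoint T S \<Longrightarrow> is_adjoint S T"
  unfolding is_adjoint_def by (metis cinner_commute)

lemma adjoint_eqI:
  assumes "is_adjoint T S"
  shows "adjoint T = S"
proof -
  have unique: "S' = S" if "is_adjoint T S'" for S'
  proof
    fix x
    have "cinner (S' x - S x) y = 0" for y
      using that assms by (simp add: is_adjointD cinner_diff_left)
    then show "S' x = S x"
      using cinner_eq_zero_iff by (metis eq_iff_diff_eq_0)
  qed
  have "is_adjoint T (adjoint T)"
    using assms unfolding adjoint_def is_adjoint_def
    by (rule someI[where P = "\<lambda>S. \<forall>x y. cinner (S x) y = cinner x (T y)"])
  then show ?thesis by (rule unique)
qed

lemma is_adjoint_add:
  "is_adjoint S S' \<Longrightarrow> is_adjoint T T' \<Longrightarrow> is_adjoint (\<lambda>x. S x + T x) (\<lambda>x. S' x + T' x)"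
  unfolding is_adjoint_def by (simp add: cinner_add_left cinner_add_right)

lemma is_adjoint_diff:
  "is_adjoint S S' \<Longrightarrow> is_adjoint T T' \<Longrightarrow> is_adjoint (\<lambda>x. S x - T x) (\<lambda>x. S' x - T' x)"
  unfolding is_adjoint_def by (simp add: cinner_diff_left cinner_diff_right)

lemma is_adjoint_scaleC:
  "is_adjoint T T' \<Longrightarrow> is_adjoint (\<lambda>x. a *\<^sub>C T x) (\<lambda>x. cnj a *\<^sub>C T' x)"
  unfolding is_adjoint_def by (simp add: cinner_scaleC_left cinner_scaleC_right)

lemma re_op_eq: "is_adjoint T T' \<Longrightarrow> re_op T = (\<lambda>x. (1/2) *\<^sub>C (T x + T' x))"
  unfolding re_op_def by (simp add: adjoint_eqI)

lemma is_adjoint_re_op: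
  assumes "is_adjoint T T'"
  shows "is_adjoint (re_op T) (re_op T)"
  unfolding re_op_eq[OF assms] is_adjoint_def
  by (simp add: cinner_scaleC_left cinner_scaleC_right cinner_add_left cinner_add_right
      is_adjointD[OF assms] is_adjointD[OF is_adjoint_sym[OF assms]] add.commute)

section \<open>Hilbert--Schmidt operators and the trace\<close>

definition hs_summable :: "('a::complex_inner \<Rightarrow> 'a) \<Rightarrow> 'a set \<Rightarrow> bool" where
  "hs_summable T E \<longleftrightarrow> (\<lambda>e. (norm (T e))\<^sup>2) summable_on E"

lemma hs_summable_bound:
  assumes "hs_summable P E" "hs_summable Q E"
    and bound: "\<And>e. e \<in> E \<Longrightarrow> norm (T e) \<le> norm (P e) + norm (Q e)"
  shows "hs_summable T E"
  unfolding hs_summable_def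
proof (rule summable_on_comparison_test)
  show "(\<lambda>e. 2 * (norm (P e))\<^sup>2 + 2 * (norm (Q e))\<^sup>2) summable_on E"
    using assms(1,2) unfolding hs_summable_def by (intro summable_on_add summable_on_cmult_right)
  fix e assume "e \<in> E"
  have "(norm (T e))\<^sup>2 \<le> (norm (P e) + norm (Q e))\<^sup>2"
    using bound[OF \<open>e \<in> E\<close>] by (simp add: power_mono)
  also have "\<dots> \<le> 2 * (norm (P e))\<^sup>2 + 2 * (norm (Q e))\<^sup>2"
    using sum_squares_bound[of "norm (P e)" "norm (Q e)"] by (simp add: power2_sum)
  finally show "(norm (T e))\<^sup>2 \<le> 2 * (norm (P e))\<^sup>2 + 2 * (norm (Q e))\<^sup>2" .
qed simp

lemma hs_summable_add:
  "hs_summable P E \<Longrightarrow> hs_summable Q E \<Longrightarrow> hs_summable (\<lambda>x. P x + Q x) E"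
  by (rule hs_summable_bound[where P = P and Q = Q]) (simp_all add: norm_triangle_ineq)

lemma hs_summable_diff:
  "hs_summable P E \<Longrightarrow> hs_summable Q E \<Longrightarrow> hs_summable (\<lambda>x. P x - Q x) E"
  by (rule hs_summable_bound[where P = P and Q = Q]) (simp_all add: norm_triangle_ineq4)

lemma summable_on_cinner:
  assumes "hs_summable P E" "hs_summable Q E"
  shows "(\<lambda>e. cinner (P e) (Q e)) summable_on E"
proof -
  have "(\<lambda>e. cmod (cinner (P e) (Q e))) summable_on E"
  proof (rule summable_on_comparison_test)
    show "(\<lambda>e. (norm (P e))\<^sup>2 + (norm (Q e))\<^sup>2) summable_on E"
      using assms unfolding hs_summable_def by (rule summable_on_add)
    fix e
    have "cmod (cinner (P e) (Q e)) \<le> norm (P e) * norm (Q e)"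
      by (rule Cauchy_Schwarz_cinner)
    also have "\<dots> \<le> (norm (P e))\<^sup>2 + (norm (Q e))\<^sup>2"
      by (rule mult_le_sum_squares)
    finally show "cmod (cinner (P e) (Q e)) \<le> (norm (P e))\<^sup>2 + (norm (Q e))\<^sup>2" .
  qed simp
  then show ?thesis
    by (rule abs_summable_summable)
qed

lemma hilbert_schmidt_has_adjoint:
  fixes T :: "'a::{complex_inner,complete_space} \<Rightarrow> 'a"
  assumes "hilbert_schmidt T"
  shows "\<exists>S. is_adjoint T S"
proof -
  obtain E where E: "is_onb E" and T: "hs_summable T E"
    using assms unfolding hilbert_schmidt_def hs_summable_def by blast
  have lin: "bounded_linear T" "\<And>c x. T (c *\<^sub>C x) = c *\<^sub>C T x"
    using assms bounded_clinear_imp_bounded_linear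
    unfolding hilbert_schmidt_def bounded_clinear_def by blast+
  define S where "S x = (\<Sum>\<^sub>\<infinity>e\<in>E. cinner (T e) x *\<^sub>C e)" for x
  have "(\<lambda>e. cinner (T e) x *\<^sub>C e) summable_on E" for x
  proof (rule onb_series_summable[OF E], rule summable_on_comparison_test)
    show "(\<lambda>e. (norm (T e))\<^sup>2 * (norm x)\<^sup>2) summable_on E"
      using T unfolding hs_summable_def by (rule summable_on_cmult_left)
    show "(cmod (cinner (T e) x))\<^sup>2 \<le> (norm (T e))\<^sup>2 * (norm x)\<^sup>2" for e
      using power_mono[OF Cauchy_Schwarz_cinner[of "T e" x], of 2] by (simp add: power_mult_distrib)
  qed simp
  then have S: "((\<lambda>e. cinner (T e) x *\<^sub>C e) has_sum S x) E" for x
    unfolding S_def by simp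
  have "cinner (S x) y = cinner x (T y)" for x y
  proof -
    have "((\<lambda>e. cinner y (cinner (T e) x *\<^sub>C e)) has_sum cinner y (S x)) E"
      by (rule has_sum_bounded_linear[OF bounded_linear_cinner_right S])
    then have "((\<lambda>e. cnj (cinner y (cinner (T e) x *\<^sub>C e))) has_sum cnj (cinner y (S x))) E"
      by (simp only: has_sum_cnj_iff)
    then have "((\<lambda>e. cinner e y * cinner x (T e)) has_sum cinner (S x) y) E"
      by (simp add: cinner_scaleC_right cnj_cinner mult.commute)
    moreover have "((\<lambda>e. cinner e y * cinner x (T e)) has_sum cinner x (T y)) E"
      using has_sum_bounded_linear[OF bounded_linear_compose[OF bounded_linear_cinner_right lin(1)]
          has_sum_onb_expansion[OF E, of y]]
      by (simp add: lin(2) cinner_scaleC_right)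
    ultimately show ?thesis
      by (rule has_sum_unique)
  qed
  then show ?thesis
    unfolding is_adjoint_def by blast
qed

lemma is_adjoint_adjoint:
  fixes T :: "'a::{complex_inner,complete_space} \<Rightarrow> 'a"
  shows "hilbert_schmidt T \<Longrightarrow> is_adjoint T (adjoint T)"
  using hilbert_schmidt_has_adjoint adjoint_eqI by metis

lemma summable_on_sq_cinner_onb_product:
  fixes F :: "'a::{complex_inner,complete_space} set"
  assumes F: "is_onb F" and R: "hs_summable R E"
  shows "(\<lambda>(e, f). (cmod (cinner f (R e)))\<^sup>2) summable_on E \<times> F"
proof -
  define g where "g = (\<lambda>(e, f). (cmod (cinner f (R e)))\<^sup>2)"
  have row: "((\<lambda>f. norm (g (e, f))) has_sum (norm (R e))\<^sup>2) F" for e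
    unfolding g_def using has_sum_Parseval_norm[OF F, of "R e"] by simp
  have "(\<lambda>x. norm (g x)) summable_on Sigma E (\<lambda>_. F)"
  proof (subst Infinite_Sum.abs_summable_on_Sigma_iff, intro conjI ballI)
    show "(\<lambda>f. norm (g (e, f))) summable_on F" for e
      using row[of e] by (auto simp: summable_on_def)
    have "(\<Sum>\<^sub>\<infinity>f\<in>F. norm (g (e, f))) = (norm (R e))\<^sup>2" for e
      using row by (rule infsumI)
    then show "(\<lambda>e. norm (\<Sum>\<^sub>\<infinity>f\<in>F. norm (g (e, f)))) summable_on E"
      using R unfolding hs_summable_def by simp
  qed
  then show ?thesis
    unfolding g_def[symmetric] using summable_on_iff_abs_summable_on_real by blast
qed

text \<open>Both sides are the double series of \<open>\<langle>P e, f\<rangle> \<langle>f, Q e\<rangle> = \<langle>Q' f, e\<rangle> \<langle>e, P' f\<rangle>\<close> over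
  \<open>E \<times> F\<close>, summed in the two possible orders; the series converges absolutely since each factor
  is square summable.\<close>
lemma has_sum_cinner_adjoint_swap:
  fixes E F :: "'a::{complex_inner,complete_space} set"
  assumes E: "is_onb E" and F: "is_onb F" and P: "is_adjoint P P'" and Q: "is_adjoint Q Q'"
    and "hs_summable P E" "hs_summable Q E"
  shows "((\<lambda>f. cinner (Q' f) (P' f)) has_sum (\<Sum>\<^sub>\<infinity>e\<in>E. cinner (P e) (Q e))) F"
proof -
  define h where "h = (\<lambda>(e, f). cinner (P e) f * cinner f (Q e))"
  have "(\<lambda>ef. cmod (h ef)) summable_on E \<times> F"
  proof (rule summable_on_comparison_test)
    show "(\<lambda>(e, f). (cmod (cinner f (P e)))\<^sup>2 + (cmod (cinner f (Q e)))\<^sup>2) summable_on E \<times> F"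
      using summable_on_add[OF summable_on_sq_cinner_onb_product[OF F assms(5)]
          summable_on_sq_cinner_onb_product[OF F assms(6)]]
      by (simp add: case_prod_unfold)
    fix ef :: "'a \<times> 'a"
    obtain e f where ef: "ef = (e, f)" by fastforce
    have "cmod (h ef) = cmod (cinner f (P e)) * cmod (cinner f (Q e))"
      unfolding h_def ef by (simp add: norm_mult) (metis cnj_cinner complex_mod_cnj)
    also have "\<dots> \<le> (cmod (cinner f (P e)))\<^sup>2 + (cmod (cinner f (Q e)))\<^sup>2"
      by (rule mult_le_sum_squares)
    finally show "cmod (h ef) \<le> (\<lambda>(e, f). (cmod (cinner f (P e)))\<^sup>2 + (cmod (cinner f (Q e)))\<^sup>2) ef"
      unfolding ef by simp
  qed simp
  then obtain a where a: "(h has_sum a) (E \<times> F)"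
    using abs_summable_summable unfolding summable_on_def by blast
  have "((\<lambda>e. cinner (P e) (Q e)) has_sum a) E"
    using a by (rule has_sum_Sigma') (simp add: h_def has_sum_Parseval[OF F])
  then have a_eq: "a = (\<Sum>\<^sub>\<infinity>e\<in>E. cinner (P e) (Q e))"
    by (simp add: infsumI)
  have h_adjoint: "h (e, f) = cinner (Q' f) e * cinner e (P' f)" for e f
    unfolding h_def
    by (simp add: is_adjointD[OF is_adjoint_sym[OF P]] is_adjointD[OF Q, symmetric] mult.commute)
  have "((\<lambda>(f, e). h (e, f)) has_sum a) (F \<times> E)"
    using has_sum_swap[THEN iffD1, OF a] by (simp add: h_def case_prod_unfold)
  then have "((\<lambda>f. cinner (Q' f) (P' f)) has_sum a) F"
  proof (rule has_sum_Sigma')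
    show "((\<lambda>e. (\<lambda>(f, e). h (e, f)) (f, e)) has_sum cinner (Q' f) (P' f)) E" for f
      unfolding prod.case h_adjoint by (rule has_sum_Parseval[OF E])
  qed
  with a_eq show ?thesis by simp
qed

lemma has_sum_norm_sq_adjoint:
  fixes E F :: "'a::{complex_inner,complete_space} set"
  assumes "is_onb E" "is_onb F" "is_adjoint T T'" "hs_summable T E"
  shows "((\<lambda>f. (norm (T' f))\<^sup>2) has_sum (\<Sum>\<^sub>\<infinity>e\<in>E. (norm (T e))\<^sup>2)) F"
proof -
  have "((\<lambda>f. cinner (T' f) (T' f)) has_sum (\<Sum>\<^sub>\<infinity>e\<in>E. cinner (T e) (T e))) F"
    using has_sum_cinner_adjoint_swap[OF assms(1-3) assms(3-4) assms(4)] .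
  then show ?thesis
    using has_sum_Re infsum_Re[OF summable_on_cinner[OF assms(4) assms(4)]]
    by (fastforce simp: norm_sq_eq_Re_cinner)
qed

definition trace_basis :: "'a::complex_inner set" where
  "trace_basis = (SOME E. is_onb E)"

lemma trace_eq: "trace T = (\<Sum>\<^sub>\<infinity>e\<in>trace_basis. cinner e (T e))"
  unfolding trace_def trace_basis_def ..

lemma is_onb_trace_basis:
  fixes E :: "'a::complex_inner set"
  shows "is_onb E \<Longrightarrow> is_onb (trace_basis :: 'a set)"
  unfolding trace_basis_def by (rule someI)

context
  fixes T :: "'a::{complex_inner,complete_space} \<Rightarrow> 'a"
  assumes T: "hilbert_schmidt T"
begin

lemma hilbert_schmidt_onb_trace_basis: "is_onb (trace_basis :: 'a set)"
  using T is_onb_trace_basis unfolding hilbert_schmidt_def by blast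

lemma hs_summable_adjoint_trace_basis: "hs_summable (adjoint T) trace_basis"
proof -
  obtain E where "is_onb E" "hs_summable T E"
    using T unfolding hilbert_schmidt_def hs_summable_def by blast
  then show ?thesis
    using has_sum_norm_sq_adjoint[OF _ hilbert_schmidt_onb_trace_basis is_adjoint_adjoint[OF T]]
    unfolding hs_summable_def summable_on_def by blast
qed

lemma hs_summable_trace_basis: "hs_summable T trace_basis"
  using has_sum_norm_sq_adjoint[OF hilbert_schmidt_onb_trace_basis hilbert_schmidt_onb_trace_basis
      is_adjoint_sym[OF is_adjoint_adjoint[OF T]] hs_summable_adjoint_trace_basis]
  unfolding hs_summable_def summable_on_def by blast

lemma infsum_norm_sq_adjoint_trace_basis:
  "(\<Sum>\<^sub>\<infinity>e\<in>trace_basis. (norm (adjoint T e))\<^sup>2) = (\<Sum>\<^sub>\<infinity>e\<in>trace_basis. (norm (T e))\<^sup>2)"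
  using has_sum_norm_sq_adjoint[OF hilbert_schmidt_onb_trace_basis hilbert_schmidt_onb_trace_basis
      is_adjoint_adjoint[OF T] hs_summable_trace_basis]
  by (rule infsumI)

end

lemma trace_comp_adjoint:
  "is_adjoint T T' \<Longrightarrow> trace (\<lambda>x. T (R x)) = (\<Sum>\<^sub>\<infinity>e\<in>trace_basis. cinner (T' e) (R e))"
  unfolding trace_eq by (simp add: is_adjointD)

lemma Re_infsum_cinner_self:
  "Re (\<Sum>\<^sub>\<infinity>e\<in>E. cinner (T e) (T e)) = (\<Sum>\<^sub>\<infinity>e\<in>E. (norm (T e::'a::complex_inner))\<^sup>2)"
proof (cases "(\<lambda>e. (norm (T e))\<^sup>2) summable_on E")
  case True
  then have "(\<lambda>e. cinner (T e) (T e)) summable_on E"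
    unfolding cinner_self by (rule summable_on_of_real)
  then show ?thesis
    by (simp add: infsum_Re[symmetric] norm_sq_eq_Re_cinner)
next
  case False
  then have "\<not> (\<lambda>e. cinner (T e) (T e)) summable_on E"
    using summable_on_Re by (fastforce simp: norm_sq_eq_Re_cinner)
  with False show ?thesis
    by (simp add: infsum_not_exists)
qed

lemma hs_norm_eq:
  assumes "is_adjoint T T'"
  shows "hs_norm T = sqrt (\<Sum>\<^sub>\<infinity>e\<in>trace_basis. (norm (T e))\<^sup>2)"
  unfolding hs_norm_def trace_comp_adjoint[OF is_adjoint_sym[OF assms]] adjoint_eqI[OF assms]
  by (simp add: Re_infsum_cinner_self)

lemma hs_norm_nonneg: "is_adjoint T T' \<Longrightarrow> hs_norm T \<ge> 0"
  by (simp add: hs_norm_eq infsum_nonneg)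

lemma hs_norm_sq: "is_adjoint T T' \<Longrightarrow> (hs_norm T)\<^sup>2 = (\<Sum>\<^sub>\<infinity>e\<in>trace_basis. (norm (T e))\<^sup>2)"
  by (simp add: hs_norm_eq infsum_nonneg)

section \<open>The lower bound\<close>

context
  fixes B C :: "'a::{complex_inner,complete_space} \<Rightarrow> 'a"
  assumes B: "hilbert_schmidt B" and C: "hilbert_schmidt C"
begin

lemma trace_sum_diff_squares:
  "trace (\<lambda>x. B (B x + C x) + C (B x + C x)) + trace (\<lambda>x. B (B x - C x) - C (B x - C x))
     + 2 * trace (\<lambda>x. B (B x - C x) + C (B x - C x)) = 4 * trace (\<lambda>x. B (B x))"
proof -
  let ?E = "trace_basis :: 'a set"
  define X X' Y Y' where "X = (\<lambda>x. B x + C x)" and "X' = (\<lambda>x. adjoint B x + adjoint C x)"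
    and "Y = (\<lambda>x. B x - C x)" and "Y' = (\<lambda>x. adjoint B x - adjoint C x)"
  have aX: "is_adjoint X X'" and aY: "is_adjoint Y Y'"
    unfolding X_def X'_def Y_def Y'_def
    using is_adjoint_add is_adjoint_diff is_adjoint_adjoint[OF B] is_adjoint_adjoint[OF C] by blast+
  note summable = hs_summable_trace_basis[OF B] hs_summable_trace_basis[OF C]
    hs_summable_adjoint_trace_basis[OF B] hs_summable_adjoint_trace_basis[OF C]
  have sX: "hs_summable X ?E" "hs_summable X' ?E" and sY: "hs_summable Y ?E" "hs_summable Y' ?E"
    unfolding X_def X'_def Y_def Y'_def
    using hs_summable_add hs_summable_diff summable by blast+
  have hs: "((\<lambda>e. cinner (P e) (Q e)) has_sum (\<Sum>\<^sub>\<infinity>e\<in>?E. cinner (P e) (Q e))) ?E"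
    if "hs_summable P ?E" "hs_summable Q ?E" for P Q
    using summable_on_cinner[OF that] by simp
  have swap: "((\<lambda>e. cinner (Y' e) (X e)) has_sum (\<Sum>\<^sub>\<infinity>e\<in>?E. cinner (X' e) (Y e))) ?E"
    using has_sum_cinner_adjoint_swap[OF hilbert_schmidt_onb_trace_basis[OF B]
        hilbert_schmidt_onb_trace_basis[OF B] is_adjoint_sym[OF aX] aY sX(2) sY(1)] .
  have "((\<lambda>e. cinner (X' e) (X e) + cinner (Y' e) (Y e) + cinner (X' e) (Y e) + cinner (Y' e) (X e))
      has_sum (trace (\<lambda>x. X (X x)) + trace (\<lambda>x. Y (Y x)) + trace (\<lambda>x. X (Y x))
        + trace (\<lambda>x. X (Y x)))) ?E"
    unfolding trace_comp_adjoint[OF aX] trace_comp_adjoint[OF aY]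
    by (intro has_sum_add hs sX sY swap)
  moreover have "cinner (X' e) (X e) + cinner (Y' e) (Y e) + cinner (X' e) (Y e) + cinner (Y' e) (X e)
      = 4 * cinner (adjoint B e) (B e)" for e
    unfolding X_def X'_def Y_def Y'_def
    by (simp add: cinner_add_left cinner_add_right cinner_diff_left cinner_diff_right algebra_simps)
  ultimately have "((\<lambda>e. 4 * cinner (adjoint B e) (B e))
      has_sum (trace (\<lambda>x. X (X x)) + trace (\<lambda>x. Y (Y x)) + 2 * trace (\<lambda>x. X (Y x)))) ?E"
    by (simp add: algebra_simps)
  moreover have "((\<lambda>e. 4 * cinner (adjoint B e) (B e)) has_sum 4 * trace (\<lambda>x. B (B x))) ?E"
    using has_sum_cmult_right[OF hs[OF summable(3,1)]]
    by (simp add: trace_comp_adjoint[OF is_adjoint_adjoint[OF B]])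
  ultimately show ?thesis
    unfolding X_def Y_def by (simp add: has_sum_unique)
qed

lemma Re_trace_sum_adjoint_diff:
  "Re (trace (\<lambda>x. B (adjoint (\<lambda>y. B y - C y) x) + C (adjoint (\<lambda>y. B y - C y) x)))
     = (hs_norm B)\<^sup>2 - (hs_norm C)\<^sup>2"
proof -
  let ?E = "trace_basis :: 'a set"
  define B' C' where "B' = adjoint B" and "C' = adjoint C"
  have aB: "is_adjoint B B'" and aC: "is_adjoint C C'"
    unfolding B'_def C'_def by (rule is_adjoint_adjoint[OF B], rule is_adjoint_adjoint[OF C])
  have sB': "hs_summable B' ?E" and sC': "hs_summable C' ?E"
    unfolding B'_def C'_def
    by (rule hs_summable_adjoint_trace_basis[OF B], rule hs_summable_adjoint_trace_basis[OF C])
  have trace: "trace (\<lambda>x. B (adjoint (\<lambda>y. B y - C y) x) + C (adjoint (\<lambda>y. B y - C y) x))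
      = (\<Sum>\<^sub>\<infinity>e\<in>?E. cinner (B' e + C' e) (B' e - C' e))"
    using trace_comp_adjoint[OF is_adjoint_add[OF aB aC], of "\<lambda>x. B' x - C' x"]
    by (simp add: adjoint_eqI[OF is_adjoint_diff[OF aB aC]])
  have Re_sum: "((\<lambda>e. Re (cinner (B' e + C' e) (B' e - C' e)))
      has_sum Re (\<Sum>\<^sub>\<infinity>e\<in>?E. cinner (B' e + C' e) (B' e - C' e))) ?E"
    using summable_on_cinner[OF hs_summable_add[OF sB' sC'] hs_summable_diff[OF sB' sC']]
    by (intro has_sum_Re) simp
  have "((\<lambda>e. Re (cinner (B' e + C' e) (B' e - C' e)))
      has_sum (hs_norm B)\<^sup>2 - (hs_norm C)\<^sup>2) ?E"
    unfolding Re_cinner_add_diff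
      hs_norm_sq[OF is_adjoint_adjoint[OF B]] hs_norm_sq[OF is_adjoint_adjoint[OF C]]
      infsum_norm_sq_adjoint_trace_basis[OF B, symmetric]
      infsum_norm_sq_adjoint_trace_basis[OF C, symmetric]
    using sB' sC' unfolding B'_def C'_def hs_summable_def
    by (intro has_sum_diff) simp_all
  then show ?thesis
    unfolding trace by (rule has_sum_unique[OF Re_sum])
qed

lemma hs_norm_parallelogram:
  "(hs_norm (\<lambda>x. B x + C x))\<^sup>2 + (hs_norm (\<lambda>x. B x - C x))\<^sup>2 = 2 * (hs_norm B)\<^sup>2 + 2 * (hs_norm C)\<^sup>2"
proof -
  let ?E = "trace_basis :: 'a set"
  note aB = is_adjoint_adjoint[OF B] and aC = is_adjoint_adjoint[OF C]
  note sB = hs_summable_trace_basis[OF B] and sC = hs_summable_trace_basis[OF C]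
  have "((\<lambda>e. (norm (B e + C e))\<^sup>2 + (norm (B e - C e))\<^sup>2)
      has_sum (hs_norm (\<lambda>x. B x + C x))\<^sup>2 + (hs_norm (\<lambda>x. B x - C x))\<^sup>2) ?E"
    unfolding hs_norm_sq[OF is_adjoint_add[OF aB aC]] hs_norm_sq[OF is_adjoint_diff[OF aB aC]]
    using hs_summable_add[OF sB sC] hs_summable_diff[OF sB sC] unfolding hs_summable_def
    by (intro has_sum_add) simp_all
  moreover have "((\<lambda>e. (norm (B e + C e))\<^sup>2 + (norm (B e - C e))\<^sup>2)
      has_sum 2 * (hs_norm B)\<^sup>2 + 2 * (hs_norm C)\<^sup>2) ?E"
    unfolding norm_parallelogram_cinner hs_norm_sq[OF aB] hs_norm_sq[OF aC]
    using sB sC unfolding hs_summable_def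
    by (intro has_sum_add has_sum_cmult_right) simp_all
  ultimately show ?thesis
    by (rule has_sum_unique)
qed

lemma hs_norm_re_op_lincomb_sq_le:
  assumes w: "cmod w = 1" and l: "(cmod l1)\<^sup>2 + (cmod l2)\<^sup>2 \<le> 1"
  shows "(hs_norm (re_op (\<lambda>x. w *\<^sub>C (l1 *\<^sub>C B x + l2 *\<^sub>C C x))))\<^sup>2 \<le> (hs_norm B)\<^sup>2 + (hs_norm C)\<^sup>2"
proof -
  let ?E = "trace_basis :: 'a set"
  define B' C' where "B' = adjoint B" and "C' = adjoint C"
  have aB: "is_adjoint B B'" and aC: "is_adjoint C C'"
    unfolding B'_def C'_def by (rule is_adjoint_adjoint[OF B], rule is_adjoint_adjoint[OF C])
  have sB': "hs_summable B' ?E" and sC': "hs_summable C' ?E"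
    unfolding B'_def C'_def
    by (rule hs_summable_adjoint_trace_basis[OF B], rule hs_summable_adjoint_trace_basis[OF C])
  note sB = hs_summable_trace_basis[OF B] and sC = hs_summable_trace_basis[OF C]
  define T T' where "T = (\<lambda>x. w *\<^sub>C (l1 *\<^sub>C B x + l2 *\<^sub>C C x))"
    and "T' = (\<lambda>x. cnj w *\<^sub>C (cnj l1 *\<^sub>C B' x + cnj l2 *\<^sub>C C' x))"
  have aT: "is_adjoint T T'"
    unfolding T_def T'_def
    by (intro is_adjoint_scaleC is_adjoint_add is_adjoint_scaleC[OF aB] is_adjoint_scaleC[OF aC])
  define g where "g e = ((norm (B e))\<^sup>2 + (norm (C e))\<^sup>2 + (norm (B' e))\<^sup>2 + (norm (C' e))\<^sup>2) / 2" for e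
  have bound: "(norm (re_op T e))\<^sup>2 \<le> g e" for e
  proof -
    have "(norm (T e))\<^sup>2 \<le> (norm (B e))\<^sup>2 + (norm (C e))\<^sup>2"
      unfolding T_def using w norm_lincomb_sq_le[OF l] by (simp add: norm_scaleC)
    moreover have "(norm (T' e))\<^sup>2 \<le> (norm (B' e))\<^sup>2 + (norm (C' e))\<^sup>2"
      unfolding T'_def using w l norm_lincomb_sq_le[of "cnj l1" "cnj l2"] by (simp add: norm_scaleC)
    ultimately have "((norm (T e))\<^sup>2 + (norm (T' e))\<^sup>2) / 2 \<le> g e"
      unfolding g_def by (intro divide_right_mono) simp_all
    moreover have "(norm (re_op T e))\<^sup>2 \<le> ((norm (T e))\<^sup>2 + (norm (T' e))\<^sup>2) / 2"
      unfolding re_op_eq[OF aT] by (rule norm_midpoint_sq_le)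
    ultimately show ?thesis
      by linarith
  qed
  have g_sum: "(g has_sum ((hs_norm B)\<^sup>2 + (hs_norm C)\<^sup>2)) ?E"
  proof -
    have "(g has_sum ((\<Sum>\<^sub>\<infinity>e\<in>?E. (norm (B e))\<^sup>2) + (\<Sum>\<^sub>\<infinity>e\<in>?E. (norm (C e))\<^sup>2)
        + (\<Sum>\<^sub>\<infinity>e\<in>?E. (norm (B' e))\<^sup>2) + (\<Sum>\<^sub>\<infinity>e\<in>?E. (norm (C' e))\<^sup>2)) / 2) ?E"
      unfolding g_def[abs_def] using sB sC sB' sC' unfolding hs_summable_def
      by (intro has_sum_divide_const has_sum_add) simp_all
    then show ?thesis
      unfolding B'_def C'_def infsum_norm_sq_adjoint_trace_basis[OF B] infsum_norm_sq_adjoint_trace_basis[OF C]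
        hs_norm_sq[OF aB] hs_norm_sq[OF aC] by (simp add: add_divide_distrib add.commute)
  qed
  have sS: "hs_summable (re_op T) ?E"
    unfolding hs_summable_def
  proof (rule summable_on_comparison_test)
    show "g summable_on ?E"
      using g_sum unfolding summable_on_def by blast
  qed (simp_all add: bound)
  then have "((\<lambda>e. (norm (re_op T e))\<^sup>2) has_sum (hs_norm (re_op T))\<^sup>2) ?E"
    unfolding hs_norm_sq[OF is_adjoint_re_op[OF aT]] hs_summable_def by simp
  then have "(hs_norm (re_op T))\<^sup>2 \<le> (hs_norm B)\<^sup>2 + (hs_norm C)\<^sup>2"
    using g_sum bound by (rule has_sum_mono)
  then show ?thesis
    unfolding T_def .
qed

lemma hs_norm_re_op_le_w2e:
  assumes "(cmod l1)\<^sup>2 + (cmod l2)\<^sup>2 \<le> 1"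
  shows "hs_norm (re_op (\<lambda>x. exp (\<i> * complex_of_real \<theta>) *\<^sub>C (l1 *\<^sub>C B x + l2 *\<^sub>C C x))) \<le> w2e B C"
proof -
  define W where "W = {hs_norm (re_op (\<lambda>x. exp (\<i> * complex_of_real \<theta>) *\<^sub>C (l1 *\<^sub>C B x + l2 *\<^sub>C C x)))
    | l1 l2 \<theta>. (cmod l1)\<^sup>2 + (cmod l2)\<^sup>2 \<le> 1}"
  have "bdd_above W"
  proof (rule bdd_aboveI)
    fix z assume "z \<in> W"
    then obtain l1 l2 \<theta> where
      z: "z = hs_norm (re_op (\<lambda>x. exp (\<i> * complex_of_real \<theta>) *\<^sub>C (l1 *\<^sub>C B x + l2 *\<^sub>C C x)))"
      and l: "(cmod l1)\<^sup>2 + (cmod l2)\<^sup>2 \<le> 1"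
      unfolding W_def by blast
    show "z \<le> sqrt ((hs_norm B)\<^sup>2 + (hs_norm C)\<^sup>2)"
      unfolding z by (rule real_le_rsqrt, rule hs_norm_re_op_lincomb_sq_le[OF norm_exp_i_times l])
  qed
  moreover have "hs_norm (re_op (\<lambda>x. exp (\<i> * complex_of_real \<theta>) *\<^sub>C (l1 *\<^sub>C B x + l2 *\<^sub>C C x))) \<in> W"
    unfolding W_def using assms by blast
  ultimately show ?thesis
    unfolding w2e_def W_def[symmetric] by (rule cSup_upper[rotated])
qed

end

lemma hs_norm_re_op_rotation_sq:
  fixes B :: "'a::{complex_inner,complete_space} \<Rightarrow> 'a"
  assumes B: "hilbert_schmidt B" and w: "cmod w = 1"
  shows "(hs_norm (re_op (\<lambda>x. w *\<^sub>C B x)))\<^sup>2 = Re (w\<^sup>2 * trace (\<lambda>x. B (B x))) / 2 + (hs_norm B)\<^sup>2 / 2"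
proof -
  let ?E = "trace_basis :: 'a set"
  define B' where "B' = adjoint B"
  have aB: "is_adjoint B B'" and sB': "hs_summable B' ?E"
    unfolding B'_def by (rule is_adjoint_adjoint[OF B], rule hs_summable_adjoint_trace_basis[OF B])
  note sB = hs_summable_trace_basis[OF B]
  define S where "S = (\<lambda>x. (1/2) *\<^sub>C (w *\<^sub>C B x + cnj w *\<^sub>C B' x))"
  have aT: "is_adjoint (\<lambda>x. w *\<^sub>C B x) (\<lambda>x. cnj w *\<^sub>C B' x)"
    by (rule is_adjoint_scaleC[OF aB])
  have re_op_S: "re_op (\<lambda>x. w *\<^sub>C B x) = S"
    unfolding S_def by (rule re_op_eq[OF aT])
  have sS: "hs_summable S ?E"
  proof (rule hs_summable_bound[OF sB sB'])
    fix e
    have "norm (w *\<^sub>C B e + cnj w *\<^sub>C B' e) \<le> norm (B e) + norm (B' e)"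
      using norm_triangle_ineq[of "w *\<^sub>C B e" "cnj w *\<^sub>C B' e"] w by (simp add: norm_scaleC)
    moreover have "norm (S e) = norm (w *\<^sub>C B e + cnj w *\<^sub>C B' e) / 2"
      by (simp add: S_def norm_scaleC)
    ultimately show "norm (S e) \<le> norm (B e) + norm (B' e)"
      using norm_ge_zero[of "B e"] norm_ge_zero[of "B' e"] by linarith
  qed
  have "((\<lambda>e. (norm (S e))\<^sup>2) has_sum ((\<Sum>\<^sub>\<infinity>e\<in>?E. (norm (B e))\<^sup>2) + (\<Sum>\<^sub>\<infinity>e\<in>?E. (norm (B' e))\<^sup>2)) / 4
      + Re (w\<^sup>2 * (\<Sum>\<^sub>\<infinity>e\<in>?E. cinner (B' e) (B e))) / 2) ?E"
    unfolding S_def norm_rotation_midpoint_sq[OF w]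
    using sB sB' summable_on_cinner[OF sB' sB] unfolding hs_summable_def
    by (intro has_sum_add has_sum_divide_const has_sum_Re has_sum_cmult_right) simp_all
  then show ?thesis
    unfolding re_op_S hs_norm_sq[OF is_adjoint_re_op[OF aT, unfolded re_op_S]]
      hs_norm_sq[OF aB] trace_comp_adjoint[OF aB] B'_def infsum_norm_sq_adjoint_trace_basis[OF B]
    by (simp add: infsumI)
qed

theorem corollary3p2:
  fixes B C :: "'a::{complex_inner, complete_space} \<Rightarrow> 'a"
  assumes "hilbert_schmidt B" and "hilbert_schmidt C"
  shows "(w2e B C)\<^sup>2 \<ge>
     1/8 * cmod (trace (\<lambda>x. B (B x + C x) + C (B x + C x))
               + trace (\<lambda>x. B (B x - C x) - C (B x - C x))
               + 2 * trace (\<lambda>x. B (B x - C x) + C (B x - C x)))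
     + 1/8 * ((hs_norm (\<lambda>x. B x + C x))\<^sup>2 + (hs_norm (\<lambda>x. B x - C x))\<^sup>2)
     + 1/4 * Re (trace (\<lambda>x. B (adjoint (\<lambda>y. B y - C y) x) + C (adjoint (\<lambda>y. B y - C y) x)))"
proof -
  obtain \<theta> where \<theta>: "(exp (\<i> * complex_of_real \<theta>))\<^sup>2 * trace (\<lambda>x. B (B x))
      = complex_of_real (cmod (trace (\<lambda>x. B (B x))))"
    using exists_rotation_to_modulus by blast
  let ?R = "re_op (\<lambda>x. exp (\<i> * complex_of_real \<theta>) *\<^sub>C B x)"
  have "(hs_norm ?R)\<^sup>2 = cmod (trace (\<lambda>x. B (B x))) / 2 + (hs_norm B)\<^sup>2 / 2"
    using hs_norm_re_op_rotation_sq[OF assms(1) norm_exp_i_times[of \<theta>], unfolded \<theta>] by simp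
  moreover have "hs_norm ?R \<le> w2e B C"
    using hs_norm_re_op_le_w2e[OF assms, of 1 0 \<theta>] by (simp add: scaleC_one)
  then have "(hs_norm ?R)\<^sup>2 \<le> (w2e B C)\<^sup>2"
    using hs_norm_nonneg[OF is_adjoint_re_op[OF is_adjoint_scaleC[OF is_adjoint_adjoint[OF assms(1)]]]]
    by (rule power_mono)
  ultimately show ?thesis
    using hs_norm_parallelogram[OF assms]
    unfolding trace_sum_diff_squares[OF assms] Re_trace_sum_adjoint_diff[OF assms]
    by (simp add: norm_mult field_simps)
qed

end
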